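(* Let $\omega$ be an antisymmetric bivector. For bundles with connection $(E,\nabla_E)$, $(F,\nabla_F)$ and a bundle map $T:E\to F$, define $Q(T)=T+\frac\lambda2\omega^{ij}\nabla_{Fi}\circ\nabla_j(T)$, where $\nabla_j(T)=\nabla_{Fj}\circ T-T\circ\nabla_{Ej}$. Then $Q(T):Q(E)\to Q(F)$ is a left $A_1$-module map (to order $\lambda$). If $T$ intertwines the connections then $Q(T)=T$, which is an $A_1$-bimodule map. In general, for bundle maps $S:E\to F$ and $T:F\to G$ between bundles with connection, $$Q(T\circ S)=Q(T)\circ Q(S)+\tfrac\lambda2\omega^{ij}\nabla_i(T)\circ\nabla_j(S).$$
   Context: Work over $\mathbb{C}[\lambda]/(\lambda^2)$. $A=C^\infty(M)$, coordinates $x^i$, $a_{,i}=\partial a/\partial x^i$, summation convention. $A_1$: $A[\lambda]/(\lambda^2)$ with $a\bullet b=ab+\frac\lambda2\omega^{ij}a_{,i}b_{,j}$. For a bundle $E$ with connection $\nabla_E$ (components $\nabla_{Ei}$ along $\partial_i$), $Q(E)$ is $E$ (sections, $\lambda$-extended) with $a\bullet e=ae+\frac\lambda2\omega^{ij}a_{,i}\nabla_{Ej}e$ and $e\bullet a=ae-\frac\lambda2\omega^{ij}a_{,i}\nabla_{Ej}e$. A left module map $\phi$ satisfies $\phi(a\bullet e)=a\bullet\phi(e)$. *)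

theory Defs
  imports Complex_Main "HOL-Library.Product_Plus"
begin

text \<open>A = C^infty(M) is an abstract commutative (real/complex) algebra
 'a; the coordinate derivatives a |-> a_{,i} (i < n) are maps D i satisfying additivity and
 the Leibniz rule. Sections of a bundle E form an A-module (type 'e, scalar action sE).
 A connection is given by its components nab i (along d/dx^i), additive and Leibniz.
 Elements e0 + lambda e1 of the lambda-extension (mod lambda^2) are pairs (e0, e1).\<close>

definition derivations :: "nat \<Rightarrow> (nat \<Rightarrow> 'a::comm_ring_1 \<Rightarrow> 'a) \<Rightarrow> bool" where
  "derivations n D \<longleftrightarrow> (\<forall>i<n. \<forall>a b. D i (a + b) = D i a + D i b \<and> D i (a * b) = D i a * b + a * D i b)"

definition connection :: "nat \<Rightarrow> (nat \<Rightarrow> 'a::comm_ring_1 \<Rightarrow> 'a) \<Rightarrow> ('a \<Rightarrow> 'e::ab_group_add \<Rightarrow> 'e)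
    \<Rightarrow> (nat \<Rightarrow> 'e \<Rightarrow> 'e) \<Rightarrow> bool" where
  "connection n D s nab \<longleftrightarrow> module s
     \<and> (\<forall>i<n. \<forall>e e'. nab i (e + e') = nab i e + nab i e')
     \<and> (\<forall>i<n. \<forall>a e. nab i (s a e) = s (D i a) e + s a (nab i e))"

definition bundle_map :: "('a::comm_ring_1 \<Rightarrow> 'e::ab_group_add \<Rightarrow> 'e) \<Rightarrow> ('a \<Rightarrow> 'f::ab_group_add \<Rightarrow> 'f)
    \<Rightarrow> ('e \<Rightarrow> 'f) \<Rightarrow> bool" where
  "bundle_map sE sF T \<longleftrightarrow> (\<forall>e e'. T (e + e') = T e + T e') \<and> (\<forall>a e. T (sE a e) = sF a (T e))"

definition nablaT :: "(nat \<Rightarrow> 'f::ab_group_add \<Rightarrow> 'f) \<Rightarrow> (nat \<Rightarrow> 'e \<Rightarrow> 'e) \<Rightarrow> ('e \<Rightarrow> 'f) \<Rightarrow> nat \<Rightarrow> 'e \<Rightarrow> 'f" where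
  "nablaT nF nE T j e = nF j (T e) - T (nE j e)"

definition half :: "'a::real_algebra_1" where
  "half = of_real (1/2)"

definition lmult :: "nat \<Rightarrow> (nat \<Rightarrow> nat \<Rightarrow> 'a::{comm_ring_1,real_algebra_1}) \<Rightarrow> (nat \<Rightarrow> 'a \<Rightarrow> 'a)
    \<Rightarrow> ('a \<Rightarrow> 'e::ab_group_add \<Rightarrow> 'e) \<Rightarrow> (nat \<Rightarrow> 'e \<Rightarrow> 'e) \<Rightarrow> 'a \<times> 'a \<Rightarrow> 'e \<times> 'e \<Rightarrow> 'e \<times> 'e" where
  "lmult n om D s nab x v =
     (s (fst x) (fst v),
      s (fst x) (snd v) + s (snd x) (fst v)
      + (\<Sum>i<n. \<Sum>j<n. s (half * om i j * D i (fst x)) (nab j (fst v))))"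

definition rmult :: "nat \<Rightarrow> (nat \<Rightarrow> nat \<Rightarrow> 'a::{comm_ring_1,real_algebra_1}) \<Rightarrow> (nat \<Rightarrow> 'a \<Rightarrow> 'a)
    \<Rightarrow> ('a \<Rightarrow> 'e::ab_group_add \<Rightarrow> 'e) \<Rightarrow> (nat \<Rightarrow> 'e \<Rightarrow> 'e) \<Rightarrow> 'e \<times> 'e \<Rightarrow> 'a \<times> 'a \<Rightarrow> 'e \<times> 'e" where
  "rmult n om D s nab v x =
     (s (fst x) (fst v),
      s (fst x) (snd v) + s (snd x) (fst v)
      - (\<Sum>i<n. \<Sum>j<n. s (half * om i j * D i (fst x)) (nab j (fst v))))"

definition left_module_map where
  "left_module_map n om D sE nE sF nF \<phi> \<longleftrightarrow>
     (\<forall>v w. \<phi> (v + w) = \<phi> v + \<phi> w) \<and>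
     (\<forall>x v. \<phi> (lmult n om D sE nE x v) = lmult n om D sF nF x (\<phi> v))"

definition bimodule_map where
  "bimodule_map n om D sE nE sF nF \<phi> \<longleftrightarrow>
     left_module_map n om D sE nE sF nF \<phi> \<and>
     (\<forall>x v. \<phi> (rmult n om D sE nE v x) = rmult n om D sF nF (\<phi> v) x)"

definition Qmap :: "nat \<Rightarrow> (nat \<Rightarrow> nat \<Rightarrow> 'a::{comm_ring_1,real_algebra_1}) \<Rightarrow> ('a \<Rightarrow> 'f::ab_group_add \<Rightarrow> 'f)
    \<Rightarrow> (nat \<Rightarrow> 'f \<Rightarrow> 'f) \<Rightarrow> (nat \<Rightarrow> 'e \<Rightarrow> 'e) \<Rightarrow> ('e \<Rightarrow> 'f) \<Rightarrow> 'e \<times> 'e \<Rightarrow> 'f \<times> 'f" where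
  "Qmap n om sF nF nE T v =
     (T (fst v), T (snd v) + (\<Sum>i<n. \<Sum>j<n. sF (half * om i j) (nF i (nablaT nF nE T j (fst v)))))"

definition lift :: "('e \<Rightarrow> 'f) \<Rightarrow> 'e \<times> 'e \<Rightarrow> 'f \<times> 'f" where
  "lift T v = (T (fst v), T (snd v))"

end

(*
  Everything follows from two facts about the induced connection nabla_j(T) on bundle maps:
  it is again A-linear (the a_{,j} terms of the two Leibniz rules cancel), and it satisfies
  the Leibniz rule nabla_j(T o S) = T o nabla_j(S) + nabla_j(T) o S.  For the module property,
  the lambda-part of Q(T)(a . e) differs from that of a . Q(T)(e) by the derivative a_{,i}
  falling on nabla_j(T) e inside nabla_{Fi}; together with T applied to the correction term
  a_{,i} nabla_{Ej} e this reassembles a_{,i} nabla_{Fj}(T e).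
*)
theory Submission
  imports Defs
begin

lemma bundle_map_additive: "bundle_map sE sF T \<Longrightarrow> additive T"
  unfolding bundle_map_def by unfold_locales blast

lemma bundle_map_scale: "bundle_map sE sF T \<Longrightarrow> T (sE a e) = sF a (T e)"
  unfolding bundle_map_def by blast

lemma connection_module: "connection n D s nab \<Longrightarrow> module s"
  unfolding connection_def by blast

lemma connection_additive: "connection n D s nab \<Longrightarrow> i < n \<Longrightarrow> additive (nab i)"
  unfolding connection_def by unfold_locales blast

lemma connection_Leibniz:
  "connection n D s nab \<Longrightarrow> i < n \<Longrightarrow> nab i (s a e) = s (D i a) e + s a (nab i e)"
  unfolding connection_def by blast

lemma bundle_map_nablaT:
  assumes cE: "connection n D sE nE" and cF: "connection n D sF nF"
    and T: "bundle_map sE sF T" and j: "j < n"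
  shows "bundle_map sE sF (nablaT nF nE T j)"
proof -
  interpret sF: module sF using cF by (rule connection_module)
  interpret T: additive T using T by (rule bundle_map_additive)
  interpret nE: additive "nE j" using cE j by (rule connection_additive)
  interpret nF: additive "nF j" using cF j by (rule connection_additive)
  show ?thesis
    unfolding bundle_map_def nablaT_def
    using connection_Leibniz[OF cE j] connection_Leibniz[OF cF j] bundle_map_scale[OF T]
    by (simp add: T.add nE.add nF.add sF.scale_right_diff_distrib)
qed

lemma nablaT_comp:
  assumes "additive T"
  shows "nablaT nG nE (T \<circ> S) j e = T (nablaT nF nE S j e) + nablaT nG nF T j (S e)"
proof -
  interpret T: additive T by fact
  show ?thesis unfolding nablaT_def by (simp add: T.diff)
qed

lemma Qmap_add:
  assumes cE: "connection n D sE nE" and cF: "connection n D sF nF"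
    and T: "bundle_map sE sF T"
  shows "Qmap n om sF nF nE T (v + w) = Qmap n om sF nF nE T v + Qmap n om sF nF nE T w"
proof -
  interpret sF: module sF using cF by (rule connection_module)
  interpret T: additive T using T by (rule bundle_map_additive)
  have "sF c (nF i (nablaT nF nE T j (e + e'))) =
        sF c (nF i (nablaT nF nE T j e)) + sF c (nF i (nablaT nF nE T j e'))"
    if "i < n" "j < n" for c i j e e'
  proof -
    interpret nT: additive "nablaT nF nE T j"
      using bundle_map_nablaT[OF cE cF T \<open>j < n\<close>] by (rule bundle_map_additive)
    interpret nF: additive "nF i" using cF \<open>i < n\<close> by (rule connection_additive)
    show ?thesis by (simp add: nT.add nF.add sF.scale_right_distrib)
  qed
  then show ?thesis
    unfolding Qmap_def by (simp add: T.add sum.distrib algebra_simps)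
qed

lemma Qmap_lmult:
  assumes cE: "connection n D sE nE" and cF: "connection n D sF nF"
    and T: "bundle_map sE sF T"
  shows "Qmap n om sF nF nE T (lmult n om D sE nE x v) = lmult n om D sF nF x (Qmap n om sF nF nE T v)"
proof -
  interpret sF: module sF using cF by (rule connection_module)
  interpret T: additive T using T by (rule bundle_map_additive)
  obtain a a1 where x: "x = (a, a1)" by (cases x)
  obtain e e1 where v: "v = (e, e1)" by (cases v)
  have summand: "sF (c * D i a) (T (nE j e)) + sF c (nF i (nablaT nF nE T j (sE a e)))
      = sF (c * D i a) (nF j (T e)) + sF (c * a) (nF i (nablaT nF nE T j e))"
    if "i < n" "j < n" for c i j
  proof -
    have "nF i (nablaT nF nE T j (sE a e))
        = sF (D i a) (nablaT nF nE T j e) + sF a (nF i (nablaT nF nE T j e))"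
      using bundle_map_scale[OF bundle_map_nablaT[OF cE cF T \<open>j < n\<close>]]
        connection_Leibniz[OF cF \<open>i < n\<close>] by simp
    then show ?thesis
      by (simp add: bundle_map_scale[OF T] nablaT_def sF.scale_right_distrib
          sF.scale_right_diff_distrib ac_simps)
  qed
  show ?thesis
    unfolding x v Qmap_def lmult_def
    apply (simp add: T.add T.sum bundle_map_scale[OF T] sF.scale_right_distrib sF.scale_sum_right
        algebra_simps sum.distrib[symmetric])
    apply (intro sum.cong refl)
    subgoal for i j using summand[of i j "half * om i j"] by (simp add: ac_simps)
    done
qed


lemma left_module_map_Qmap:
  assumes "connection n D sE nE" and "connection n D sF nF" and "bundle_map sE sF T"
  shows "left_module_map n om D sE nE sF nF (Qmap n om sF nF nE T)"
  unfolding left_module_map_def using Qmap_add[OF assms] Qmap_lmult[OF assms] by blast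

lemma Qmap_eq_lift:
  assumes cF: "connection n D sF nF" and flat: "\<forall>j<n. \<forall>e. nablaT nF nE T j e = 0"
  shows "Qmap n om sF nF nE T = lift T"
proof
  fix v
  interpret sF: module sF using cF by (rule connection_module)
  have "nF i 0 = 0" if "i < n" for i
    using connection_additive[OF cF that] by (rule additive.zero)
  then show "Qmap n om sF nF nE T v = lift T v"
    unfolding Qmap_def lift_def using flat by simp
qed

lemma bimodule_map_lift:
  assumes T: "bundle_map sE sF T" and intertwines: "\<forall>j<n. \<forall>e. T (nE j e) = nF j (T e)"
  shows "bimodule_map n om D sE nE sF nF (lift T)"
proof -
  interpret T: additive T using T by (rule bundle_map_additive)
  have correction: "(\<Sum>i<n. \<Sum>j<n. sF (c i j) (T (nE j e))) = (\<Sum>i<n. \<Sum>j<n. sF (c i j) (nF j (T e)))"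
    for c e by (intro sum.cong refl) (simp add: intertwines)
  show ?thesis
    unfolding bimodule_map_def left_module_map_def lift_def lmult_def rmult_def
    by (simp add: T.add T.diff T.sum bundle_map_scale[OF T] correction)
qed

lemma Qmap_comp:
  assumes cF: "connection n D sF nF" and cG: "connection n D sG nG"
    and T: "bundle_map sF sG T"
  shows "Qmap n om sG nG nE (T \<circ> S) v =
           Qmap n om sG nG nF T (Qmap n om sF nF nE S v)
           + (0, \<Sum>i<n. \<Sum>j<n. sG (half * om i j) (nablaT nG nF T i (nablaT nF nE S j (fst v))))"
proof -
  interpret sG: module sG using cG by (rule connection_module)
  interpret T: additive T using T by (rule bundle_map_additive)
  have summand: "nG i (nablaT nG nE (T \<circ> S) j e)
      = T (nF i (nablaT nF nE S j e)) + nG i (nablaT nG nF T j (S e))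
        + nablaT nG nF T i (nablaT nF nE S j e)" if "i < n" for i j e
  proof -
    interpret nG: additive "nG i" using cG \<open>i < n\<close> by (rule connection_additive)
    have "nG i (T (nablaT nF nE S j e))
        = T (nF i (nablaT nF nE S j e)) + nablaT nG nF T i (nablaT nF nE S j e)"
      by (simp add: nablaT_def)
    then show ?thesis
      by (simp add: nablaT_comp[OF bundle_map_additive[OF T], where nF = nF] nG.add)
  qed
  show ?thesis
    unfolding Qmap_def
    by (simp add: T.add T.sum bundle_map_scale[OF T] summand sG.scale_right_distrib
        sum.distrib ac_simps)
qed

theorem lemma3p2:
  fixes n :: nat
    and om :: "nat \<Rightarrow> nat \<Rightarrow> 'a::{comm_ring_1,real_algebra_1}"
    and D :: "nat \<Rightarrow> 'a \<Rightarrow> 'a"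
    and sE :: "'a \<Rightarrow> 'e::ab_group_add \<Rightarrow> 'e" and nE :: "nat \<Rightarrow> 'e \<Rightarrow> 'e"
    and sF :: "'a \<Rightarrow> 'f::ab_group_add \<Rightarrow> 'f" and nF :: "nat \<Rightarrow> 'f \<Rightarrow> 'f"
    and sG :: "'a \<Rightarrow> 'g::ab_group_add \<Rightarrow> 'g" and nG :: "nat \<Rightarrow> 'g \<Rightarrow> 'g"
  assumes D: "derivations n D"
    and antisym: "\<forall>i<n. \<forall>j<n. om i j = - om j i"
    and cE: "connection n D sE nE"
    and cF: "connection n D sF nF"
    and cG: "connection n D sG nG"
  shows "(\<forall>T. bundle_map sE sF T \<longrightarrow>
            left_module_map n om D sE nE sF nF (Qmap n om sF nF nE T))
       \<and> (\<forall>T. bundle_map sE sF T \<longrightarrow> (\<forall>j<n. \<forall>e. nablaT nF nE T j e = 0) \<longrightarrow>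
            Qmap n om sF nF nE T = lift T \<and> bimodule_map n om D sE nE sF nF (lift T))
       \<and> (\<forall>S T. bundle_map sE sF S \<longrightarrow> bundle_map sF sG T \<longrightarrow>
            (\<forall>v. Qmap n om sG nG nE (T \<circ> S) v =
                   Qmap n om sG nG nF T (Qmap n om sF nF nE S v)
                   + (0, \<Sum>i<n. \<Sum>j<n. sG (half * om i j) (nablaT nG nF T i (nablaT nF nE S j (fst v))))))"
proof (intro conjI allI impI)
  fix T assume "bundle_map sE sF T"
  then show "left_module_map n om D sE nE sF nF (Qmap n om sF nF nE T)"
    using cE cF by (intro left_module_map_Qmap)
next
  fix T assume T: "bundle_map sE sF T" and flat: "\<forall>j<n. \<forall>e. nablaT nF nE T j e = 0"
  then have "\<forall>j<n. \<forall>e. T (nE j e) = nF j (T e)"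
    unfolding nablaT_def by simp
  with T show "bimodule_map n om D sE nE sF nF (lift T)"
    by (rule bimodule_map_lift)
  show "Qmap n om sF nF nE T = lift T"
    using cF flat by (rule Qmap_eq_lift)
next
  fix S T v assume "bundle_map sF sG T"
  with cF cG show "Qmap n om sG nG nE (T \<circ> S) v =
      Qmap n om sG nG nF T (Qmap n om sF nF nE S v)
      + (0, \<Sum>i<n. \<Sum>j<n. sG (half * om i j) (nablaT nG nF T i (nablaT nF nE S j (fst v))))"
    by (rule Qmap_comp)
qed

end
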